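(* Let $k \ge 2$ be an integer. Then for all but finitely many positive integers $N$, there is a connected graph $G$ with $\mathrm{SW}_k(G)=N$.
   Context: For a connected graph $G$ and a subset $S \subset V(G)$, the Steiner distance $d(S)$ is the smallest number of edges in a connected subgraph of $G$ whose vertex set contains $S$. For an integer $k\ge 2$, the Steiner--Wiener $k$ index of $G$ is $\mathrm{SW}_k(G)=\sum_{S \subset V(G),\ |S|=k} d(S)$. *)

theory Defs
  imports Main
begin

definition simple_graph :: "'a set \<Rightarrow> 'a set set \<Rightarrow> bool" where
  "simple_graph V E \<longleftrightarrow> finite V \<and> (\<forall>e\<in>E. e \<subseteq> V \<and> card e = 2)"

definition adj_rel :: "'a set set \<Rightarrow> ('a \<times> 'a) set" where
  "adj_rel E = {(u, v). {u, v} \<in> E}"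

definition connected_graph :: "'a set \<Rightarrow> 'a set set \<Rightarrow> bool" where
  "connected_graph W F \<longleftrightarrow> W \<noteq> {} \<and> (\<forall>u\<in>W. \<forall>v\<in>W. (u, v) \<in> (adj_rel F)\<^sup>*)"

definition steiner_dist :: "'a set \<Rightarrow> 'a set set \<Rightarrow> 'a set \<Rightarrow> nat" where
  "steiner_dist V E S = (LEAST m. \<exists>W F. S \<subseteq> W \<and> W \<subseteq> V \<and> F \<subseteq> E \<and>
       (\<forall>e\<in>F. e \<subseteq> W) \<and> connected_graph W F \<and> card F = m)"

definition steiner_wiener :: "nat \<Rightarrow> 'a set \<Rightarrow> 'a set set \<Rightarrow> nat" where
  "steiner_wiener k V E = (\<Sum>S\<in>{S. S \<subseteq> V \<and> card S = k}. steiner_dist V E S)"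

end

theory Submission
  imports Defs "HOL.Binomial_Plus"
begin

text \<open>In the star with centre M and leaves 0, ..., M - 1 a k-set has Steiner distance
  k - 1 if it contains the centre and k otherwise, so its Steiner--Wiener index is
  M * C(M, k - 1).  Add the edges {w, v} with r v \<le> w < v, where the intervals
  {r v..v} are nested.  Then the distance of a k-set S drops to k - 1 exactly when
  S \<subseteq> {r (Max S)..Max S}, so the index drops by the sum of C(v - r v, k - 1) over
  v < M.  With M = k * 4^k + b, blocks of k consecutive vertices and intervals
  {k * 4^k..k * 4^k + p} realise every drop up to C(b, k) + 4^k.  These ranges of
  attained values overlap for consecutive large b, since the index of the star grows
  only by O(b^(k-1)) per step.\<close>

lemma connected_graph_parent:
  assumes "connected_graph W F" and "root \<in> W"
  obtains parent and depth :: "'a \<Rightarrow> nat"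
  where "\<And>v. v \<in> W - {root} \<Longrightarrow> (v, parent v) \<in> adj_rel F \<and> depth (parent v) < depth v"
proof -
  let ?R = "adj_rel F"
  define depth where "depth v = (LEAST j. (v, root) \<in> ?R ^^ j)" for v
  have depth: "(v, root) \<in> ?R ^^ depth v" if "v \<in> W" for v
  proof -
    from assms that obtain j where "(v, root) \<in> ?R ^^ j"
      unfolding connected_graph_def by (blast dest: rtrancl_imp_relpow)
    then show ?thesis unfolding depth_def by (rule LeastI)
  qed
  have depth_le: "depth v \<le> j" if "(v, root) \<in> ?R ^^ j" for v j
    unfolding depth_def using that by (rule Least_le)
  have "\<exists>w. (v, w) \<in> ?R \<and> depth w < depth v" if v: "v \<in> W - {root}" for v
  proof -
    have "depth v \<noteq> 0"
    proof
      assume "depth v = 0"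
      with depth[of v] v show False by simp
    qed
    then obtain j where j: "depth v = Suc j"
      using not0_implies_Suc by blast
    with depth[of v] v have "(v, root) \<in> ?R ^^ Suc j" by simp
    then obtain w where "(v, w) \<in> ?R" and "(w, root) \<in> ?R ^^ j"
      by (blast dest: relpow_Suc_D2)
    with depth_le[of w j] j show ?thesis by auto
  qed
  then obtain parent where
    "\<And>v. v \<in> W - {root} \<Longrightarrow> (v, parent v) \<in> ?R \<and> depth (parent v) < depth v"
    by metis
  then show ?thesis by (rule that)
qed

lemma connected_graph_card_le:
  assumes conn: "connected_graph W F" and "finite W" and "finite F"
  shows "card W \<le> card F + 1"
proof -
  from conn obtain root where root: "root \<in> W" unfolding connected_graph_def by blast
  obtain parent and depth :: "'a \<Rightarrow> nat" where parent:
    "\<And>v. v \<in> W - {root} \<Longrightarrow> (v, parent v) \<in> adj_rel F \<and> depth (parent v) < depth v"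
    using connected_graph_parent[OF conn root] by blast
  define edge where "edge v = {v, parent v}" for v
  have "inj_on edge (W - {root})"
  proof (rule inj_onI)
    fix x y assume x: "x \<in> W - {root}" and y: "y \<in> W - {root}" and "edge x = edge y"
    show "x = y"
    proof (rule ccontr)
      assume "x \<noteq> y"
      with \<open>edge x = edge y\<close> have "x = parent y" and "y = parent x"
        unfolding edge_def by (auto simp: doubleton_eq_iff)
      with parent[OF x] parent[OF y] show False
        by (metis less_asym)
    qed
  qed
  moreover have "edge ` (W - {root}) \<subseteq> F"
    using parent unfolding edge_def adj_rel_def by auto
  ultimately have "card (W - {root}) \<le> card F"
    using card_inj_on_le \<open>finite F\<close> by blast
  with root \<open>finite W\<close> show ?thesis by (simp add: card_Diff_singleton)
qed

definition steiner_subgraph ::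
    "'a set \<Rightarrow> 'a set set \<Rightarrow> 'a set \<Rightarrow> 'a set \<Rightarrow> 'a set set \<Rightarrow> bool" where
  "steiner_subgraph V E S W F \<longleftrightarrow>
     S \<subseteq> W \<and> W \<subseteq> V \<and> F \<subseteq> E \<and> (\<forall>e\<in>F. e \<subseteq> W) \<and> connected_graph W F"

lemma steiner_dist_eqI:
  assumes "steiner_subgraph V E S W F" and "card F = d"
    and "\<And>W F. steiner_subgraph V E S W F \<Longrightarrow> d \<le> card F"
  shows "steiner_dist V E S = d"
proof -
  have "steiner_dist V E S = (LEAST m. \<exists>W F. steiner_subgraph V E S W F \<and> card F = m)"
    unfolding steiner_dist_def steiner_subgraph_def by (simp only: conj_assoc)
  also have "\<dots> = d"
    by (rule Least_equality) (use assms in auto)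
  finally show ?thesis .
qed

lemma steiner_subgraph_card_le:
  assumes "steiner_subgraph V E S W F" and "finite V" and "finite E"
  shows "card S \<le> card W" and "card W \<le> card F + 1"
proof -
  from assms(1) have "S \<subseteq> W" "W \<subseteq> V" "F \<subseteq> E" "connected_graph W F"
    unfolding steiner_subgraph_def by auto
  moreover from this have "finite W" "finite F"
    using assms(2,3) by (auto intro: finite_subset)
  ultimately show "card S \<le> card W" and "card W \<le> card F + 1"
    using card_mono[of W S] connected_graph_card_le[of W F] by simp_all
qed

definition star :: "'a \<Rightarrow> 'a set \<Rightarrow> 'a set set" where
  "star c A = (\<lambda>x. {x, c}) ` A"

lemma card_star: "card (star c A) = card A"
  unfolding star_def by (rule card_image) (auto simp: inj_on_def doubleton_eq_iff)

lemma connected_graph_star: "connected_graph (insert c A) (star c A)"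
proof -
  have "(x, c) \<in> adj_rel (star c A) \<and> (c, x) \<in> adj_rel (star c A)" if "x \<in> A" for x
    using that unfolding star_def adj_rel_def by (auto simp: insert_commute)
  then show ?thesis
    unfolding connected_graph_def by (blast intro: rtrancl_trans)
qed

lemma connected_graph_mono:
  assumes "connected_graph W F" and "F \<subseteq> F'"
  shows "connected_graph W F'"
proof -
  have "adj_rel F \<subseteq> adj_rel F'"
    using assms(2) unfolding adj_rel_def by auto
  with assms(1) show ?thesis
    unfolding connected_graph_def by (meson rtrancl_mono subsetD)
qed

definition interval_edges :: "(nat \<Rightarrow> nat) \<Rightarrow> nat \<Rightarrow> nat set set" where
  "interval_edges r M = {{w, v} | w v. r v \<le> w \<and> w < v \<and> v \<le> M}"

definition nested_reach :: "(nat \<Rightarrow> nat) \<Rightarrow> bool" where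
  "nested_reach r \<longleftrightarrow> (\<forall>v. r v \<le> v) \<and> (\<forall>m v. r m \<le> v \<longrightarrow> v \<le> m \<longrightarrow> r m \<le> r v)"

lemma doubleton_in_interval_edges:
  "{a, b} \<in> interval_edges r M \<longleftrightarrow>
     (r b \<le> a \<and> a < b \<and> b \<le> M) \<or> (r a \<le> b \<and> b < a \<and> a \<le> M)"
  unfolding interval_edges_def by (auto simp: doubleton_eq_iff)

lemma star_subset_interval_edges:
  assumes "\<forall>x\<in>A. r c \<le> x \<and> x < c" and "c \<le> M"
  shows "star c A \<subseteq> interval_edges r M"
  using assms unfolding star_def by (auto simp: doubleton_in_interval_edges)

lemma finite_interval_edges: "finite (interval_edges r M)"
proof (rule finite_subset)
  show "interval_edges r M \<subseteq> Pow {0..M}"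
    unfolding interval_edges_def by auto
qed simp

lemma simple_graph_interval_edges: "simple_graph {0..M} (interval_edges r M)"
  unfolding simple_graph_def interval_edges_def by (auto simp: card_2_iff)

lemma connected_graph_interval_edges:
  assumes "r M = 0"
  shows "connected_graph {0..M} (interval_edges r M)"
proof (rule connected_graph_mono)
  have "{0..M} = insert M {..<M}" by auto
  then show "connected_graph {0..M} (star M {..<M})"
    using connected_graph_star by metis
  show "star M {..<M} \<subseteq> interval_edges r M"
    using assms by (intro star_subset_interval_edges) auto
qed

text \<open>Stepping down from a vertex v lands in {r v..v}, which nestedness keeps inside
  {r m..m}.\<close>

lemma interval_edges_walk_ge:
  assumes r: "nested_reach r" and F: "F \<subseteq> interval_edges r M"
    and below: "\<forall>e\<in>F. \<forall>z\<in>e. z \<le> m" and walk: "(m, y) \<in> (adj_rel F)\<^sup>*"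
  shows "r m \<le> y"
proof -
  from walk have "r m \<le> y \<and> y \<le> m"
  proof (induction rule: rtrancl_induct)
    case base
    then show ?case using r unfolding nested_reach_def by simp
  next
    case (step y z)
    then have "{y, z} \<in> F" unfolding adj_rel_def by simp
    then have "z \<le> m" and edge: "{y, z} \<in> interval_edges r M"
      using below F by auto
    moreover have "r m \<le> z" if "z < y"
    proof -
      from edge that have "r y \<le> z" by (auto simp: doubleton_in_interval_edges)
      moreover have "r m \<le> r y"
        using r step.IH unfolding nested_reach_def by blast
      ultimately show ?thesis by simp
    qed
    moreover have "y \<noteq> z"
      using edge by (auto simp: doubleton_in_interval_edges)
    ultimately show ?case using step.IH by fastforce
  qed
  then show ?thesis ..
qed

lemma steiner_dist_interval_edges_within_reach:
  assumes S: "finite S" "S \<noteq> {}" "S \<subseteq> {0..M}" and reach: "r (Max S) \<le> Min S"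
  shows "steiner_dist {0..M} (interval_edges r M) S = card S - 1"
proof -
  let ?V = "{0..M}" and ?E = "interval_edges r M" and ?m = "Max S"
  have m: "?m \<in> S" "\<forall>x\<in>S - {?m}. r ?m \<le> x \<and> x < ?m"
    using S(1,2) reach Min_le[of S] Max_ge[of S]
    by (auto simp: le_neq_implies_less intro: order.trans)
  then have "star ?m (S - {?m}) \<subseteq> ?E"
    using S(3) by (intro star_subset_interval_edges) auto
  moreover have "connected_graph S (star ?m (S - {?m}))"
    using connected_graph_star m(1) by (metis insert_Diff)
  ultimately have "steiner_subgraph ?V ?E S S (star ?m (S - {?m}))"
    using S(3) m(1) unfolding steiner_subgraph_def star_def by auto
  moreover have "card (star ?m (S - {?m})) = card S - 1"
    using m(1) S(1) by (simp add: card_star)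
  moreover have "card S - 1 \<le> card F" if "steiner_subgraph ?V ?E S W F" for W F
    using steiner_subgraph_card_le[OF that] finite_interval_edges by simp
  ultimately show ?thesis by (rule steiner_dist_eqI)
qed

lemma steiner_dist_interval_edges_beyond_reach:
  assumes r: "nested_reach r" and "r M = 0"
    and S: "finite S" "S \<noteq> {}" "S \<subseteq> {0..M}" and beyond: "\<not> r (Max S) \<le> Min S"
  shows "steiner_dist {0..M} (interval_edges r M) S = card S"
proof -
  let ?V = "{0..M}" and ?E = "interval_edges r M" and ?m = "Max S"
  have m: "?m \<in> S" "\<forall>x\<in>S. x \<le> ?m" using S(1,2) by simp_all
  have "M \<notin> S"
  proof
    assume "M \<in> S"
    then have "?m = M" using m S(3) by (meson antisym atLeastAtMost_iff subsetD)
    with beyond \<open>r M = 0\<close> show False by simp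
  qed
  have "x < M" if "x \<in> S" for x
  proof -
    from that S(3) have "x \<le> M" by auto
    moreover from that \<open>M \<notin> S\<close> have "x \<noteq> M" by auto
    ultimately show ?thesis by simp
  qed
  then have "star M S \<subseteq> ?E"
    using \<open>r M = 0\<close> by (intro star_subset_interval_edges) auto
  then have "steiner_subgraph ?V ?E S (insert M S) (star M S)"
    using S(3) connected_graph_star unfolding steiner_subgraph_def star_def by auto
  moreover have "card (star M S) = card S" by (rule card_star)
  moreover have "card S \<le> card F" if sub: "steiner_subgraph ?V ?E S W F" for W F
  proof (rule ccontr)
    assume "\<not> card S \<le> card F"
    with steiner_subgraph_card_le[OF sub] finite_interval_edges
    have "card S = card W" by simp
    moreover have "S \<subseteq> W" "W \<subseteq> ?V"
      using sub unfolding steiner_subgraph_def by auto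
    moreover from this have "finite W" by (auto intro: finite_subset)
    ultimately have "S = W" by (intro card_subset_eq)
    with sub have "F \<subseteq> ?E" "\<forall>e\<in>F. e \<subseteq> S" "connected_graph S F"
      unfolding steiner_subgraph_def by auto
    moreover have "Min S \<in> S" using S(1,2) by simp
    ultimately have "F \<subseteq> ?E" "\<forall>e\<in>F. \<forall>z\<in>e. z \<le> ?m" "(?m, Min S) \<in> (adj_rel F)\<^sup>*"
      using m unfolding connected_graph_def by blast+
    then have "r ?m \<le> Min S" by (rule interval_edges_walk_ge[OF r])
    with beyond show False ..
  qed
  ultimately show ?thesis by (rule steiner_dist_eqI)
qed

lemma steiner_dist_interval_edges:
  assumes "nested_reach r" and "r M = 0" and "S \<subseteq> {0..M}" and "S \<noteq> {}"
  shows "steiner_dist {0..M} (interval_edges r M) S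
           = (if r (Max S) \<le> Min S then card S - 1 else card S)"
  using assms finite_subset[OF assms(3)] steiner_dist_interval_edges_within_reach
    steiner_dist_interval_edges_beyond_reach by simp

lemma Max_insert_below:
  fixes m :: nat
  assumes "A \<subseteq> {..<m}"
  shows "Max (insert m A) = m"
proof (rule Max_eqI)
  show "finite (insert m A)" using finite_subset[OF assms finite_lessThan] by simp
qed (use assms in auto)

lemma subsets_within_reach_eq_UN:
  fixes r :: "nat \<Rightarrow> nat"
  assumes r: "\<forall>v. r v \<le> v" and "1 \<le> k"
  shows "{S. S \<subseteq> {0..M} \<and> card S = k \<and> r (Max S) \<le> Min S}
           = (\<Union>m\<le>M. insert m ` {A. A \<subseteq> {r m..<m} \<and> card A = k - 1})"
proof (intro equalityI subsetI)
  fix S assume "S \<in> {S. S \<subseteq> {0..M} \<and> card S = k \<and> r (Max S) \<le> Min S}"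
  then have S: "S \<subseteq> {0..M}" "card S = k" "r (Max S) \<le> Min S" by auto
  have "finite S" using S(1) by (rule finite_subset) simp
  moreover have "S \<noteq> {}" using S(2) \<open>1 \<le> k\<close> by auto
  ultimately have m: "Max S \<in> S" "S - {Max S} \<subseteq> {r (Max S)..<Max S}"
    using S(3) Min_le[of S] Max_ge[of S] by (auto simp: le_neq_implies_less intro: order.trans)
  moreover have "card (S - {Max S}) = k - 1" using S(2) \<open>finite S\<close> m(1) by simp
  moreover have "Max S \<le> M" using m(1) S(1) by auto
  ultimately show "S \<in> (\<Union>m\<le>M. insert m ` {A. A \<subseteq> {r m..<m} \<and> card A = k - 1})"
    by (auto intro!: bexI[of _ "Max S"] image_eqI[of _ _ "S - {Max S}"])
next
  fix S assume "S \<in> (\<Union>m\<le>M. insert m ` {A. A \<subseteq> {r m..<m} \<and> card A = k - 1})"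
  then obtain m A where "m \<le> M" "S = insert m A" and A: "A \<subseteq> {r m..<m}" "card A = k - 1"
    by auto
  moreover have "finite A" using A(1) by (rule finite_subset) simp
  moreover have "Max (insert m A) = m" using A(1) by (intro Max_insert_below) auto
  moreover have "r m \<le> Min (insert m A)" using A(1) r \<open>finite A\<close> by auto
  moreover have "m \<notin> A" using A(1) by auto
  ultimately show "S \<in> {S. S \<subseteq> {0..M} \<and> card S = k \<and> r (Max S) \<le> Min S}"
    using \<open>1 \<le> k\<close> by auto
qed

lemma card_subsets_within_reach_of_Max:
  fixes r :: "nat \<Rightarrow> nat"
  assumes "\<forall>v. r v \<le> v" and "1 \<le> k"
  shows "card {S. S \<subseteq> {0..M} \<and> card S = k \<and> r (Max S) \<le> Min S}
           = (\<Sum>m\<le>M. (m - r m) choose (k - 1))"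
proof -
  define T where "T m = {A. A \<subseteq> {r m..<m} \<and> card A = k - 1}" for m
  have "card (\<Union>m\<le>M. insert m ` T m) = (\<Sum>m\<le>M. card (insert m ` T m))"
  proof (rule card_UN_disjoint)
    show "\<forall>m\<in>{..M}. \<forall>m'\<in>{..M}. m \<noteq> m' \<longrightarrow> insert m ` T m \<inter> insert m' ` T m' = {}"
    proof (intro ballI impI equals0I)
      fix m m' S assume "m \<noteq> m'" and "S \<in> insert m ` T m \<inter> insert m' ` T m'"
      then obtain A A' where "S = insert m A" "A \<subseteq> {r m..<m}" "S = insert m' A'" "A' \<subseteq> {r m'..<m'}"
        unfolding T_def by blast
      moreover from this have "A \<subseteq> {..<m}" "A' \<subseteq> {..<m'}" by auto
      ultimately have "Max S = m" and "Max S = m'" using Max_insert_below by metis+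
      with \<open>m \<noteq> m'\<close> show False by simp
    qed
  qed (auto simp: T_def)
  also have "\<dots> = (\<Sum>m\<le>M. (m - r m) choose (k - 1))"
  proof (rule sum.cong)
    fix m
    have "m \<notin> A" if "A \<in> T m" for A
      using that unfolding T_def by auto
    then have "inj_on (insert m) (T m)"
      by (intro inj_onI) (metis insert_ident)
    then have "card (insert m ` T m) = card (T m)" by (rule card_image)
    also have "\<dots> = (m - r m) choose (k - 1)"
      unfolding T_def by (simp add: n_subsets)
    finally show "card (insert m ` T m) = (m - r m) choose (k - 1)" .
  qed simp
  finally show ?thesis
    using subsets_within_reach_eq_UN[OF assms] unfolding T_def by simp
qed

definition star_sw :: "nat \<Rightarrow> nat \<Rightarrow> nat" where
  "star_sw k M = M * (M choose (k - 1))"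

lemma steiner_wiener_interval_edges:
  assumes r: "nested_reach r" and "r M = 0" and "2 \<le> k"
  shows "steiner_wiener k {0..M} (interval_edges r M) + (\<Sum>m<M. (m - r m) choose (k - 1))
           = star_sw k M"
proof -
  let ?Sk = "{S. S \<subseteq> {0..M} \<and> card S = k}"
  let ?good = "\<lambda>S. r (Max S) \<le> Min S"
  have "steiner_wiener k {0..M} (interval_edges r M) + card {S \<in> ?Sk. ?good S}
          = (\<Sum>S\<in>?Sk. steiner_dist {0..M} (interval_edges r M) S + (if ?good S then 1 else 0))"
    unfolding steiner_wiener_def sum.distrib by (simp add: sum.If_cases Int_def)
  also have "\<dots> = (\<Sum>S\<in>?Sk. k)"
  proof (rule sum.cong[OF refl])
    fix S assume "S \<in> ?Sk"
    then have "S \<subseteq> {0..M}" "S \<noteq> {}" "card S = k" using \<open>2 \<le> k\<close> by auto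
    then show "steiner_dist {0..M} (interval_edges r M) S + (if ?good S then 1 else 0) = k"
      using steiner_dist_interval_edges[OF r \<open>r M = 0\<close>] \<open>2 \<le> k\<close> by simp
  qed
  also have "\<dots> = k * (Suc M choose k)"
    by (simp add: n_subsets)
  also have "\<dots> = Suc M * (M choose (k - 1))"
    using times_binomial_minus1_eq[of k "Suc M"] \<open>2 \<le> k\<close> by simp
  finally have "steiner_wiener k {0..M} (interval_edges r M) + card {S \<in> ?Sk. ?good S}
                  = Suc M * (M choose (k - 1))" .
  moreover have "{S \<in> ?Sk. ?good S} = {S. S \<subseteq> {0..M} \<and> card S = k \<and> ?good S}"
    by auto
  then have "card {S \<in> ?Sk. ?good S} = (\<Sum>m<Suc M. (m - r m) choose (k - 1))"
    using card_subsets_within_reach_of_Max[of r k M] r \<open>2 \<le> k\<close>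
    unfolding nested_reach_def lessThan_Suc_atMost by simp
  moreover have "(\<Sum>m<Suc M. (m - r m) choose (k - 1))
                   = (\<Sum>m<M. (m - r m) choose (k - 1)) + (M choose (k - 1))"
    using \<open>r M = 0\<close> by simp
  ultimately show ?thesis unfolding star_sw_def by simp
qed

definition sw_attained :: "nat \<Rightarrow> nat \<Rightarrow> bool" where
  "sw_attained k N \<longleftrightarrow>
     (\<exists>(V :: nat set) E. simple_graph V E \<and> connected_graph V E \<and> steiner_wiener k V E = N)"

definition block_tops :: "nat \<Rightarrow> nat \<Rightarrow> nat set" where
  "block_tops k t = (\<lambda>j. j * k + (k - 1)) ` {..<t}"

text \<open>Vertices below k * U form blocks of k; the top of each of the first t blocks
  reaches down to the bottom of its block, so each such block is one k-set at distance
  k - 1.  Vertex k * U + p with p \<in> P reaches down to k * U, contributing C(p, k - 1)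
  such k-sets.  All other vertices reach nothing, except the top vertex k * U + b,
  which is universal.\<close>

definition deficit_reach :: "nat \<Rightarrow> nat \<Rightarrow> nat \<Rightarrow> nat \<Rightarrow> nat set \<Rightarrow> nat \<Rightarrow> nat" where
  "deficit_reach k U b t P v =
     (if v < k * U then (if v \<in> block_tops k t then v - (k - 1) else v)
      else if v < k * U + b then (if v - k * U \<in> P then k * U else v)
      else 0)"

lemma block_tops_gap:
  assumes "0 < k" and "v \<in> block_tops k t" and "m \<in> block_tops k t"
    and "m - (k - 1) \<le> v" and "v \<le> m"
  shows "v = m"
proof -
  from assms(2,3) obtain i j where v: "v = i * k + (k - 1)" and m: "m = j * k + (k - 1)"
    unfolding block_tops_def by auto
  have "j * k \<le> i * k + (k - 1)" using assms(4) v m by simp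
  also have "\<dots> < (i + 1) * k" using assms(1) by simp
  finally have "j < i + 1" using mult_less_cancel2 by blast
  moreover have "i * k + (k - 1) \<le> j * k + (k - 1)" using assms(5) v m by simp
  then have "i \<le> j" using assms(1) by (simp only: add_le_cancel_right mult_le_cancel2)
  ultimately show ?thesis using v m by simp
qed

lemma block_tops_subset:
  assumes "0 < k" and "t \<le> U"
  shows "block_tops k t \<subseteq> {..<k * U}"
proof
  fix x assume "x \<in> block_tops k t"
  then obtain j where "j < t" "x = j * k + (k - 1)" unfolding block_tops_def by auto
  moreover have "(j + 1) * k \<le> U * k" using \<open>j < t\<close> \<open>t \<le> U\<close> by (intro mult_le_mono1) simp
  ultimately show "x \<in> {..<k * U}" using \<open>0 < k\<close> by (simp add: algebra_simps)
qed

lemma card_block_tops: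
  assumes "0 < k"
  shows "card (block_tops k t) = t"
proof -
  have "inj_on (\<lambda>j. j * k + (k - 1)) {..<t}"
  proof (rule inj_onI)
    fix x y assume "x * k + (k - 1) = y * k + (k - 1)"
    then have "x * k = y * k" by (simp only: add_right_cancel)
    then show "x = y" using \<open>0 < k\<close> by simp
  qed
  then show ?thesis unfolding block_tops_def by (simp add: card_image)
qed

lemma nested_reach_deficit_reach:
  assumes "0 < k"
  shows "nested_reach (deficit_reach k U b t P)"
  unfolding nested_reach_def
proof (intro conjI allI impI)
  let ?r = "deficit_reach k U b t P"
  show "?r v \<le> v" for v unfolding deficit_reach_def by auto
  fix m v assume mv: "?r m \<le> v" "v \<le> m"
  show "?r m \<le> ?r v"
  proof (cases "m < k * U \<and> m \<in> block_tops k t")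
    case True
    then have "?r m = m - (k - 1)" "v < k * U" using mv(2) by (simp_all add: deficit_reach_def)
    moreover from this have "v = m" if "v \<in> block_tops k t"
      using block_tops_gap[OF assms that] True mv by simp
    ultimately show ?thesis using mv by (auto simp: deficit_reach_def)
  next
    case False
    then show ?thesis using mv by (auto simp: deficit_reach_def split: if_splits)
  qed
qed

lemma sum_deficit_reach:
  assumes "2 \<le> k" and "t \<le> U" and "P \<subseteq> {..<b}"
  shows "(\<Sum>m<k * U + b. (m - deficit_reach k U b t P m) choose (k - 1))
           = t + (\<Sum>p\<in>P. p choose (k - 1))"
proof -
  let ?f = "\<lambda>m. (m - deficit_reach k U b t P m) choose (k - 1)"
  have "?f m = (if m \<in> block_tops k t then 1 else 0)" if "m < k * U" for m
  proof (cases "m \<in> block_tops k t")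
    case True
    then have "k - 1 \<le> m" unfolding block_tops_def by auto
    with True that show ?thesis by (simp add: deficit_reach_def)
  next
    case False
    with that \<open>2 \<le> k\<close> show ?thesis by (simp add: deficit_reach_def)
  qed
  then have "(\<Sum>m<k * U. ?f m) = (\<Sum>m<k * U. if m \<in> block_tops k t then 1 else 0)"
    by (intro sum.cong) auto
  also have "\<dots> = t"
    using block_tops_subset[of k t U] card_block_tops[of k t] assms
    by (simp add: sum.If_cases Int_absorb1)
  finally have low: "(\<Sum>m<k * U. ?f m) = t" .
  have "(\<Sum>m\<in>{k * U..<k * U + b}. ?f m) = (\<Sum>p\<in>{0..<b}. ?f (p + k * U))"
    using sum.shift_bounds_nat_ivl[of ?f 0 "k * U" b] by (simp add: add.commute)
  also have "\<dots> = (\<Sum>p\<in>{0..<b}. if p \<in> P then p choose (k - 1) else 0)"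
    using \<open>2 \<le> k\<close> by (intro sum.cong) (auto simp: deficit_reach_def)
  also have "\<dots> = (\<Sum>p\<in>P. p choose (k - 1))"
    using \<open>P \<subseteq> {..<b}\<close> by (simp add: sum.If_cases Int_absorb1 atLeast0LessThan)
  finally have high: "(\<Sum>m\<in>{k * U..<k * U + b}. ?f m) = (\<Sum>p\<in>P. p choose (k - 1))" .
  have "(\<Sum>m<k * U + b. ?f m) = (\<Sum>m<k * U. ?f m) + (\<Sum>m\<in>{k * U..<k * U + b}. ?f m)"
    by (simp add: atLeast0LessThan[symmetric] sum.atLeastLessThan_concat)
  with low high show ?thesis by simp
qed

lemma sw_attained_deficit:
  assumes "2 \<le> k" and "t \<le> U" and "P \<subseteq> {..<b}"
  shows "sw_attained k (star_sw k (k * U + b) - (t + (\<Sum>p\<in>P. p choose (k - 1))))"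
proof -
  let ?M = "k * U + b" and ?r = "deficit_reach k U b t P"
  have "?r ?M = 0" by (simp add: deficit_reach_def)
  moreover have "nested_reach ?r"
    using \<open>2 \<le> k\<close> by (intro nested_reach_deficit_reach) simp
  ultimately have "steiner_wiener k {0..?M} (interval_edges ?r ?M) + (t + (\<Sum>p\<in>P. p choose (k - 1)))
                     = star_sw k ?M"
    using steiner_wiener_interval_edges[of ?r ?M k] sum_deficit_reach[OF assms] \<open>2 \<le> k\<close> by simp
  then have "steiner_wiener k {0..?M} (interval_edges ?r ?M)
               = star_sw k ?M - (t + (\<Sum>p\<in>P. p choose (k - 1)))"
    by linarith
  then show ?thesis
    unfolding sw_attained_def
    using simple_graph_interval_edges connected_graph_interval_edges[of ?r ?M, OF \<open>?r ?M = 0\<close>]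
    by blast
qed

lemma binomial_pred_le_four_pow: "p choose (k - 1) \<le> 4 ^ k + (p choose k)"
proof (cases "2 * k \<le> p")
  case True
  then have "p choose (k - 1) \<le> p choose k" by (intro binomial_mono) auto
  then show ?thesis by simp
next
  case False
  have "p choose (k - 1) \<le> 2 ^ p" by (rule binomial_le_pow2)
  also have "\<dots> \<le> 2 ^ (2 * k)" using False by (intro power_increasing) auto
  also have "\<dots> = 4 ^ k" by (simp add: power_mult)
  finally show ?thesis by simp
qed

text \<open>Greedy: use p = b - 1 whenever its binomial still fits; Pascal's rule keeps the
  remainder below C(b - 1, k) + U either way.\<close>

lemma binomial_sum_repr:
  assumes "1 \<le> k" and small: "\<And>p. p choose (k - 1) \<le> U + (p choose k)"
    and "Y \<le> (b choose k) + U"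
  shows "\<exists>P t. P \<subseteq> {..<b} \<and> t \<le> U \<and> Y = t + (\<Sum>p\<in>P. p choose (k - 1))"
  using assms(3)
proof (induction b arbitrary: Y)
  case 0
  then have "Y \<le> U" using \<open>1 \<le> k\<close> by (cases k) simp_all
  then show ?case by (intro exI[of _ "{}"] exI[of _ Y]) simp
next
  case (Suc b)
  have pascal: "Suc b choose k = (b choose (k - 1)) + (b choose k)"
    using \<open>1 \<le> k\<close> by (cases k) simp_all
  show ?case
  proof (cases "b choose (k - 1) \<le> Y")
    case True
    with Suc.prems pascal have "Y - (b choose (k - 1)) \<le> (b choose k) + U" by simp
    from Suc.IH[OF this] obtain P t where P: "P \<subseteq> {..<b}" "t \<le> U"
      "Y - (b choose (k - 1)) = t + (\<Sum>p\<in>P. p choose (k - 1))" by blast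
    have "(\<Sum>p\<in>insert b P. p choose (k - 1)) = (b choose (k - 1)) + (\<Sum>p\<in>P. p choose (k - 1))"
      using P(1) by (intro sum.insert) (auto intro: finite_subset)
    with P True have "insert b P \<subseteq> {..<Suc b} \<and> t \<le> U \<and>
                        Y = t + (\<Sum>p\<in>insert b P. p choose (k - 1))"
      by auto
    then show ?thesis by blast
  next
    case False
    with small[of b] have "Y \<le> (b choose k) + U" by simp
    from Suc.IH[OF this] obtain P t where "P \<subseteq> {..<b}" "t \<le> U"
      "Y = t + (\<Sum>p\<in>P. p choose (k - 1))" by blast
    moreover from this have "P \<subseteq> {..<Suc b}" by auto
    ultimately show ?thesis by blast
  qed
qed

lemma sw_attained_near_star:
  assumes "2 \<le> k"
    and "star_sw k (k * 4 ^ k + b) - ((b choose k) + 4 ^ k) \<le> N"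
    and "N \<le> star_sw k (k * 4 ^ k + b)"
  shows "sw_attained k N"
proof -
  let ?Y = "star_sw k (k * 4 ^ k + b) - N"
  have "?Y \<le> (b choose k) + 4 ^ k" using assms(2) by linarith
  then obtain P t where "P \<subseteq> {..<b}" "t \<le> 4 ^ k" "?Y = t + (\<Sum>p\<in>P. p choose (k - 1))"
    using binomial_sum_repr[of k "4 ^ k" ?Y b] binomial_pred_le_four_pow \<open>2 \<le> k\<close> by auto
  moreover have "N = star_sw k (k * 4 ^ k + b) - ?Y" using assms(3) by simp
  ultimately show ?thesis using sw_attained_deficit[OF \<open>2 \<le> k\<close>] by simp
qed

lemma pow_le_pow_mult_binomial:
  assumes "1 \<le> k" and "k \<le> n"
  shows "n ^ k \<le> k ^ k * (n choose k)"
proof -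
  have "(real n / real k) ^ k \<le> real (n choose k)"
    using assms(2) by (rule binomial_ge_n_over_k_pow_k)
  then have "real n ^ k \<le> real k ^ k * real (n choose k)"
    using assms(1) by (simp add: power_divide divide_le_eq mult.commute)
  then show ?thesis by (simp flip: of_nat_power of_nat_mult)
qed

lemma mult_binomial_pred_le_binomial:
  assumes "2 \<le> k" and "D \<le> b" and large: "k ^ (k + 1) * 2 ^ k \<le> b"
  shows "k * ((b + D) choose (k - 1)) \<le> (b + 1) choose k"
proof -
  have "k \<le> k ^ (k + 1)" using \<open>2 \<le> k\<close> by (intro self_le_power) auto
  also have "\<dots> \<le> k ^ (k + 1) * 2 ^ k" by simp
  also have "\<dots> \<le> b" by (rule large)
  finally have "k \<le> b + 1" by simp
  have "k ^ k * (k * ((b + D) choose (k - 1))) \<le> k ^ (k + 1) * (b + D) ^ (k - 1)"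
    using binomial_le_pow[of "k - 1" "b + D"] \<open>2 \<le> k\<close>
    by (cases "k - 1 \<le> b + D") (simp_all add: binomial_eq_0 mult.assoc)
  also have "\<dots> \<le> k ^ (k + 1) * (2 * (b + 1)) ^ (k - 1)"
    using \<open>D \<le> b\<close> by (intro mult_left_mono power_mono) auto
  also have "\<dots> = (k ^ (k + 1) * 2 ^ (k - 1)) * (b + 1) ^ (k - 1)"
    by (simp only: power_mult_distrib mult.assoc)
  also have "\<dots> \<le> (b + 1) * (b + 1) ^ (k - 1)"
  proof (intro mult_right_mono)
    have "k ^ (k + 1) * 2 ^ (k - 1) \<le> k ^ (k + 1) * 2 ^ k"
      by (intro mult_left_mono power_increasing) auto
    with large show "k ^ (k + 1) * 2 ^ (k - 1) \<le> b + 1" by linarith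
  qed simp
  also have "\<dots> = (b + 1) ^ k"
    using \<open>2 \<le> k\<close> by (simp flip: power_Suc)
  also have "\<dots> \<le> k ^ k * ((b + 1) choose k)"
    using \<open>2 \<le> k\<close> \<open>k \<le> b + 1\<close> by (intro pow_le_pow_mult_binomial) auto
  finally show ?thesis using \<open>2 \<le> k\<close> by simp
qed

lemma star_sw_Suc_le:
  assumes "2 \<le> k"
  shows "star_sw k (Suc M) \<le> star_sw k M + k * (Suc M choose (k - 1))"
proof -
  obtain j where k: "k = Suc (Suc j)" using assms by (metis add_2_eq_Suc le_Suc_ex)
  have "Suc M * (Suc M choose Suc j) = Suc M * (M choose j) + Suc M * (M choose Suc j)"
    by (simp add: add_mult_distrib2)
  also have "\<dots> = Suc j * (Suc M choose Suc j) + M * (M choose Suc j) + (M choose Suc j)"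
    using Suc_times_binomial_eq[of M j] by simp
  also have "\<dots> \<le> M * (M choose Suc j) + Suc (Suc j) * (Suc M choose Suc j)"
    by simp
  finally show ?thesis unfolding star_sw_def k by simp
qed

lemma star_sw_Suc_le_binomial:
  assumes "2 \<le> k" and "D + 1 + k ^ (k + 1) * 2 ^ k \<le> b"
  shows "star_sw k (D + Suc b) \<le> star_sw k (D + b) + (Suc b choose k)"
proof -
  have "star_sw k (D + Suc b) \<le> star_sw k (D + b) + k * (Suc (D + b) choose (k - 1))"
    using star_sw_Suc_le[OF assms(1)] by simp
  also have "k * (Suc (D + b) choose (k - 1)) \<le> Suc b choose k"
    using mult_binomial_pred_le_binomial[OF assms(1), of "D + 1" b] assms(2) by (simp add: ac_simps)
  finally show ?thesis by simp
qed

lemma le_star_sw: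
  assumes "k - 1 \<le> M"
  shows "M \<le> star_sw k M"
proof -
  from assms have "1 \<le> M choose (k - 1)" by (simp add: Suc_le_eq)
  then have "M * 1 \<le> star_sw k M" unfolding star_sw_def by (rule mult_le_mono2)
  then show ?thesis by simp
qed

lemma finite_complement_of_overlapping_intervals:
  fixes f g :: "nat \<Rightarrow> nat"
  assumes cover: "\<And>b N. f b - g b \<le> N \<Longrightarrow> N \<le> f b \<Longrightarrow> Q N"
    and overlap: "\<And>b. b0 \<le> b \<Longrightarrow> f (Suc b) - g (Suc b) \<le> f b + 1"
    and unbounded: "\<And>b. b \<le> f b"
  shows "finite {N. \<not> Q N}"
proof -
  have "Q N" if "f b0 - g b0 \<le> N" "N \<le> f (b0 + j)" for j N
    using that
  proof (induction j arbitrary: N)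
    case 0
    then show ?case using cover by simp
  next
    case (Suc j)
    show ?case
    proof (cases "N \<le> f (b0 + j)")
      case True
      with Suc.prems(1) show ?thesis by (rule Suc.IH)
    next
      case False
      with overlap[of "b0 + j"] have "f (Suc (b0 + j)) - g (Suc (b0 + j)) \<le> N" by simp
      with Suc.prems(2) show ?thesis by (intro cover) simp_all
    qed
  qed
  moreover have "N \<le> f (b0 + N)" for N
    using unbounded[of "b0 + N"] by simp
  ultimately have "{N. \<not> Q N} \<subseteq> {..<f b0 - g b0}"
    by (auto simp: not_less[symmetric])
  then show ?thesis by (rule finite_subset) simp
qed

theorem theorem1p1:
  fixes k :: nat
  assumes "k \<ge> 2"
  shows "finite {N :: nat. N > 0 \<and>
           \<not> (\<exists>(V :: nat set) E. simple_graph V E \<and> connected_graph V E \<and>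
                 steiner_wiener k V E = N)}"
proof -
  define U :: nat where "U = 4 ^ k"
  have "finite {N. \<not> sw_attained k N}"
  proof (rule finite_complement_of_overlapping_intervals[where
        f = "\<lambda>b. star_sw k (k * U + b)" and g = "\<lambda>b. (b choose k) + U"])
    show "sw_attained k N"
      if "star_sw k (k * U + b) - ((b choose k) + U) \<le> N" "N \<le> star_sw k (k * U + b)" for b N
      using sw_attained_near_star[OF assms] that unfolding U_def by blast
    show "star_sw k (k * U + Suc b) - ((Suc b choose k) + U) \<le> star_sw k (k * U + b) + 1"
      if "k * U + 1 + k ^ (k + 1) * 2 ^ k \<le> b" for b
      using star_sw_Suc_le_binomial[OF assms that] by linarith
    show "b \<le> star_sw k (k * U + b)" for b
    proof -
      have "k \<le> k * U" unfolding U_def by simp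
      then have "k - 1 \<le> k * U + b" by linarith
      then show ?thesis using le_star_sw by (meson le_add2 order.trans)
    qed
  qed
  then show ?thesis
    unfolding sw_attained_def by (rule finite_subset[rotated]) auto
qed

end
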